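(* Let $Q=(q_n)$ be a basic sequence and let $x=E_0.E_1E_2\cdots$ (w.r.t. $Q$) be $Q$-distribution normal. If $y=F_0.F_1F_2\cdots$ (w.r.t. $Q$) satisfies $$\lim_{N\to\infty}\frac1N\sum_{n=1}^N\frac{|E_n-F_n|+1}{q_n}=0,$$ then $y$ is $Q$-distribution normal.
   Context: A basic sequence is a sequence $Q=(q_n)_{n\ge1}$ of integers with $q_n\ge2$. The $Q$-Cantor series expansion of a real $x$ is the unique expansion $x=E_0+\sum_{n\ge1}\frac{E_n}{q_1\cdots q_n}$ with $E_0=\lfloor x\rfloor$, $E_n\in\{0,\dots,q_n-1\}$ and $E_n\ne q_n-1$ infinitely often; written $x=E_0.E_1E_2\cdots$ w.r.t. $Q$. Let $T_{Q,n}(x)=\left(\prod_{j=1}^n q_j\right)x \bmod 1$ (with $T_{Q,0}(x)=x\bmod1$). A real $x$ is $Q$-distribution normal if the sequence $(T_{Q,n}(x))_{n\ge0}$ is uniformly distributed modulo $1$. *)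

theory Defs
  imports "HOL-Analysis.Analysis"
begin

text \<open>A basic sequence Q = (q_n)_{n>=1}; the value at index 0 is irrelevant.\<close>
definition basic_sequence :: "(nat \<Rightarrow> nat) \<Rightarrow> bool" where
  "basic_sequence Q \<longleftrightarrow> (\<forall>n\<ge>1. Q n \<ge> 2)"

definition cantor_expansion :: "(nat \<Rightarrow> nat) \<Rightarrow> real \<Rightarrow> (nat \<Rightarrow> int) \<Rightarrow> bool" where
  "cantor_expansion Q x E \<longleftrightarrow>
     E 0 = \<lfloor>x\<rfloor> \<and>
     (\<forall>n\<ge>1. 0 \<le> E n \<and> E n \<le> int (Q n) - 1) \<and>
     infinite {n. n \<ge> 1 \<and> E n \<noteq> int (Q n) - 1} \<and>
     (\<lambda>n. real_of_int (E (Suc n)) / (\<Prod>j=1..Suc n. real (Q j))) sums (x - real_of_int (E 0))"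

definition T_Q :: "(nat \<Rightarrow> nat) \<Rightarrow> nat \<Rightarrow> real \<Rightarrow> real" where
  "T_Q Q n x = frac ((\<Prod>j=1..n. real (Q j)) * x)"

definition uniformly_distributed_mod1 :: "(nat \<Rightarrow> real) \<Rightarrow> bool" where
  "uniformly_distributed_mod1 u \<longleftrightarrow>
     (\<forall>a b. 0 \<le> a \<and> a < b \<and> b \<le> 1 \<longrightarrow>
        (\<lambda>N. real (card {n. n < N \<and> a \<le> frac (u n) \<and> frac (u n) < b}) / real N)
          \<longlonglongrightarrow> b - a)"

definition Q_distribution_normal :: "(nat \<Rightarrow> nat) \<Rightarrow> real \<Rightarrow> bool" where
  "Q_distribution_normal Q x \<longleftrightarrow> uniformly_distributed_mod1 (\<lambda>n. T_Q Q n x)"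

end

theory Submission
  imports Defs
begin

text \<open>
  Write R_n(x) = sum_{k>=0} E_{n+1+k} / (q_{n+1} ... q_{n+1+k}) for the n-th tail
  of the Cantor expansion of x.  The tails satisfy R_n = (E_{n+1} + R_{n+1}) / q_{n+1}, lie in
  [0,1) (the digits are not eventually maximal) and differ from (q_1 ... q_n) x by an integer,
  hence R_n(x) = T_{Q,n}(x).  Consequently
     |T_{Q,n}(x) - T_{Q,n}(y)| <= (|E_{n+1} - F_{n+1}| + 1) / q_{n+1} =: d_n,
  and the hypothesis says that the Cesaro means of d_n tend to 0.
\<close>

definition freq :: "(nat \<Rightarrow> real) \<Rightarrow> real \<Rightarrow> real \<Rightarrow> nat \<Rightarrow> real" where
  "freq u a b N = real (card {n. n < N \<and> a \<le> u n \<and> u n < b}) / real N"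

definition exceptional_density :: "(nat \<Rightarrow> real) \<Rightarrow> real \<Rightarrow> nat \<Rightarrow> real" where
  "exceptional_density d \<delta> N = real (card {n. n < N \<and> \<delta> \<le> d n}) / real N"

lemma uniformly_distributed_mod1_freq:
  assumes "\<And>n. 0 \<le> u n \<and> u n < 1"
  shows "uniformly_distributed_mod1 u \<longleftrightarrow>
           (\<forall>a b. 0 \<le> a \<and> a < b \<and> b \<le> 1 \<longrightarrow> freq u a b \<longlonglongrightarrow> b - a)"
proof -
  have "frac (u n) = u n" for n using assms[of n] by (simp add: frac_eq)
  thus ?thesis by (simp add: uniformly_distributed_mod1_def freq_def[abs_def])
qed

text \<open>Markov's inequality for Cesaro means: if the averages of d tend to 0, then the indices
  with d_n >= delta have density 0.\<close>
lemma exceptional_density_tendsto_0: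
  fixes d :: "nat \<Rightarrow> real"
  assumes d_nonneg: "\<And>n. 0 \<le> d n"
    and mean: "(\<lambda>N. (1 / real N) * (\<Sum>n<N. d n)) \<longlonglongrightarrow> 0"
    and "\<delta> > 0"
  shows "exceptional_density d \<delta> \<longlonglongrightarrow> 0"
proof (rule tendsto_sandwich[of "\<lambda>_. 0" _ _ "\<lambda>N. ((1 / real N) * (\<Sum>n<N. d n)) / \<delta>"])
  show "\<forall>\<^sub>F N in sequentially. exceptional_density d \<delta> N \<le> ((1 / real N) * (\<Sum>n<N. d n)) / \<delta>"
  proof (intro always_eventually allI)
    fix N
    let ?S = "{n. n < N \<and> \<delta> \<le> d n}"
    have "real (card ?S) * \<delta> = (\<Sum>n\<in>?S. \<delta>)" by simp
    also have "\<dots> \<le> (\<Sum>n\<in>?S. d n)" by (rule sum_mono) auto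
    also have "\<dots> \<le> (\<Sum>n<N. d n)" by (rule sum_mono2) (auto simp: d_nonneg)
    finally have "real (card ?S) \<le> (\<Sum>n<N. d n) / \<delta>" using \<open>\<delta> > 0\<close> by (simp add: field_simps)
    hence "real (card ?S) / real N \<le> (\<Sum>n<N. d n) / \<delta> / real N" by (rule divide_right_mono) simp
    thus "exceptional_density d \<delta> N \<le> ((1 / real N) * (\<Sum>n<N. d n)) / \<delta>"
      by (simp add: exceptional_density_def mult.commute)
  qed
  show "(\<lambda>N. ((1 / real N) * (\<Sum>n<N. d n)) / \<delta>) \<longlonglongrightarrow> 0"
    using tendsto_divide[OF mean tendsto_const[of \<delta>]] \<open>\<delta> > 0\<close> by simp
qed (auto simp: exceptional_density_def)

lemma freq_transfer:
  fixes u v d :: "nat \<Rightarrow> real"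
  assumes "\<And>n. d n < \<delta> \<Longrightarrow> a \<le> v n \<Longrightarrow> v n < b \<Longrightarrow> a' \<le> u n \<and> u n < b'"
  shows "freq v a b N \<le> freq u a' b' N + exceptional_density d \<delta> N"
proof -
  have "{n. n < N \<and> a \<le> v n \<and> v n < b} \<subseteq>
        {n. n < N \<and> a' \<le> u n \<and> u n < b'} \<union> {n. n < N \<and> \<delta> \<le> d n}"
    using assms by force
  hence "card {n. n < N \<and> a \<le> v n \<and> v n < b} \<le>
         card ({n. n < N \<and> a' \<le> u n \<and> u n < b'} \<union> {n. n < N \<and> \<delta> \<le> d n})"
    by (intro card_mono) auto
  also have "\<dots> \<le> card {n. n < N \<and> a' \<le> u n \<and> u n < b'} + card {n. n < N \<and> \<delta> \<le> d n}"
    by (rule card_Un_le)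
  finally show ?thesis
    unfolding freq_def exceptional_density_def add_divide_distrib[symmetric]
    by (intro divide_right_mono) simp_all
qed

context
  fixes u v d :: "nat \<Rightarrow> real"
  assumes u_ud: "uniformly_distributed_mod1 u"
    and u_range: "\<And>n. 0 \<le> u n \<and> u n < 1"
    and close: "\<And>n. \<bar>u n - v n\<bar> \<le> d n"
    and mean: "(\<lambda>N. (1 / real N) * (\<Sum>n<N. d n)) \<longlonglongrightarrow> 0"
begin

private lemma u_freq:
  assumes "0 \<le> a" "a < b" "b \<le> 1" "e > 0"
  shows "eventually (\<lambda>N. \<bar>freq u a b N - (b - a)\<bar> < e) sequentially"
  using u_ud assms unfolding uniformly_distributed_mod1_freq[OF u_range] tendsto_iff dist_real_def
  by blast

private lemma rare_exceptions:
  assumes "\<delta> > 0"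
  shows "eventually (\<lambda>N. exceptional_density d \<delta> N < \<delta>) sequentially"
proof -
  have "0 \<le> d n" for n using close[of n] by linarith
  from exceptional_density_tendsto_0[OF this mean assms] assms show ?thesis
    unfolding tendsto_iff dist_real_def by (auto elim!: allE[of _ \<delta>] eventually_mono)
qed

text \<open>Upper bound: compare with the counts of u on the interval widened by delta = e/4.\<close>
lemma perturbed_freq_upper:
  assumes "0 \<le> a" "a < b" "b \<le> 1" "e > 0"
  shows "eventually (\<lambda>N. freq v a b N < b - a + e) sequentially"
proof -
  define \<delta> where "\<delta> = e / 4"
  define a' where "a' = max 0 (a - \<delta>)"
  define b' where "b' = min 1 (b + \<delta>)"
  have "\<delta> > 0" using assms by (simp add: \<delta>_def)
  have widened: "0 \<le> a'" "a' < b'" "b' \<le> 1" "b' - a' \<le> b - a + 2 * \<delta>"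
    using assms \<open>\<delta> > 0\<close> by (auto simp: a'_def b'_def)
  have transfer: "freq v a b N \<le> freq u a' b' N + exceptional_density d \<delta> N" for N
  proof (rule freq_transfer)
    fix n assume "d n < \<delta>" "a \<le> v n" "v n < b"
    with close[of n] u_range[of n] show "a' \<le> u n \<and> u n < b'" by (auto simp: a'_def b'_def)
  qed
  show ?thesis
    using eventually_conj[OF u_freq[OF widened(1-3) \<open>\<delta> > 0\<close>] rare_exceptions[OF \<open>\<delta> > 0\<close>]]
  proof (rule eventually_mono)
    fix N assume "\<bar>freq u a' b' N - (b' - a')\<bar> < \<delta> \<and> exceptional_density d \<delta> N < \<delta>"
    with transfer[of N] widened(4) show "freq v a b N < b - a + e"
      unfolding abs_less_iff \<delta>_def by linarith
  qed
qed

text \<open>Lower bound: compare with the counts of u on the interval shrunk by delta = e/4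
  (trivial if that interval is empty).\<close>
lemma perturbed_freq_lower:
  assumes "0 \<le> a" "a < b" "b \<le> 1" "e > 0"
  shows "eventually (\<lambda>N. b - a - e < freq v a b N) sequentially"
proof (cases "a + e / 4 < b - e / 4")
  case True
  define \<delta> where "\<delta> = e / 4"
  have "\<delta> > 0" using assms by (simp add: \<delta>_def)
  have narrowed: "0 \<le> a + \<delta>" "a + \<delta> < b - \<delta>" "b - \<delta> \<le> 1"
    using assms True \<open>\<delta> > 0\<close> by (auto simp: \<delta>_def)
  have transfer: "freq u (a + \<delta>) (b - \<delta>) N \<le> freq v a b N + exceptional_density d \<delta> N" for N
  proof (rule freq_transfer)
    fix n assume "d n < \<delta>" "a + \<delta> \<le> u n" "u n < b - \<delta>"
    with close[of n] show "a \<le> v n \<and> v n < b" by auto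
  qed
  show ?thesis
    using eventually_conj[OF u_freq[OF narrowed \<open>\<delta> > 0\<close>] rare_exceptions[OF \<open>\<delta> > 0\<close>]]
  proof (rule eventually_mono)
    fix N
    assume "\<bar>freq u (a + \<delta>) (b - \<delta>) N - (b - \<delta> - (a + \<delta>))\<bar> < \<delta>
            \<and> exceptional_density d \<delta> N < \<delta>"
    with transfer[of N] show "b - a - e < freq v a b N"
      unfolding abs_less_iff \<delta>_def by linarith
  qed
next
  case False
  hence "b - a - e < 0" using assms by simp
  moreover have "0 \<le> freq v a b N" for N by (simp add: freq_def)
  ultimately show ?thesis by (intro always_eventually allI) (meson less_le_trans)
qed

lemma uniformly_distributed_mod1_perturb:
  assumes v_range: "\<And>n. 0 \<le> v n \<and> v n < 1"
  shows "uniformly_distributed_mod1 v"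
  unfolding uniformly_distributed_mod1_freq[OF v_range] tendsto_iff dist_real_def
proof (intro allI impI)
  fix a b e :: real assume ab: "0 \<le> a \<and> a < b \<and> b \<le> 1" and "e > 0"
  show "eventually (\<lambda>N. \<bar>freq v a b N - (b - a)\<bar> < e) sequentially"
    using eventually_conj[OF perturbed_freq_upper perturbed_freq_lower, of a b e a b e] ab \<open>e > 0\<close>
    by (auto elim: eventually_mono)
qed

end

definition block_prod :: "(nat \<Rightarrow> nat) \<Rightarrow> nat \<Rightarrow> nat \<Rightarrow> real" where
  "block_prod Q n k = (\<Prod>i<k. real (Q (n + 1 + i)))"

lemma block_prod_Suc: "block_prod Q n (Suc k) = block_prod Q n k * real (Q (n + 1 + k))"
  by (simp add: block_prod_def)

lemma block_prod_Suc_head: "block_prod Q n (Suc k) = real (Q (n + 1)) * block_prod Q (Suc n) k"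
  unfolding block_prod_def by (subst prod.lessThan_Suc_shift) (simp add: add_ac)

lemma block_prod_from_0: "(\<Prod>j=1..n. real (Q j)) = block_prod Q 0 n"
  unfolding block_prod_def using prod.atLeast1_atMost_eq[of "\<lambda>j. real (Q j)" n] by simp

lemma block_prod_ge_power:
  assumes "basic_sequence Q"
  shows "block_prod Q n k \<ge> 2 ^ k"
proof (induction k)
  case (Suc k)
  have "real (Q (n + 1 + k)) \<ge> 2" using assms by (simp add: basic_sequence_def)
  moreover have "0 \<le> block_prod Q n k" using Suc by (rule order_trans[rotated]) simp
  ultimately have "block_prod Q n k * real (Q (n + 1 + k)) \<ge> 2 ^ k * 2"
    using Suc by (intro mult_mono) auto
  thus ?case by (simp add: block_prod_Suc mult.commute)
qed (simp add: block_prod_def)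

definition tail_term :: "(nat \<Rightarrow> nat) \<Rightarrow> (nat \<Rightarrow> int) \<Rightarrow> nat \<Rightarrow> nat \<Rightarrow> real" where
  "tail_term Q E n k = real_of_int (E (n + 1 + k)) / block_prod Q n (Suc k)"

definition cantor_tail :: "(nat \<Rightarrow> nat) \<Rightarrow> (nat \<Rightarrow> int) \<Rightarrow> nat \<Rightarrow> real" where
  "cantor_tail Q E n = (\<Sum>k. tail_term Q E n k)"

context
  fixes Q :: "nat \<Rightarrow> nat" and E :: "nat \<Rightarrow> int"
  assumes basic: "basic_sequence Q"
    and digits: "\<And>m. m \<ge> 1 \<Longrightarrow> 0 \<le> E m \<and> E m \<le> int (Q m) - 1"
begin

private lemma Q_ge_2: "m \<ge> 1 \<Longrightarrow> real (Q m) \<ge> 2"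
  using basic by (simp add: basic_sequence_def)

private lemma block_prod_pos: "block_prod Q n k > 0"
  using block_prod_ge_power[OF basic, where n=n and k=k] by (rule less_le_trans[rotated]) simp

lemma tail_term_bounds: "0 \<le> tail_term Q E n k \<and> tail_term Q E n k \<le> (1/2) ^ k"
proof
  show "0 \<le> tail_term Q E n k"
    using digits[of "n + 1 + k"] block_prod_pos[of n "Suc k"] by (simp add: tail_term_def)
  have "real_of_int (E (n + 1 + k)) \<le> real (Q (n + 1 + k))" using digits[of "n + 1 + k"] by simp
  hence "tail_term Q E n k \<le> real (Q (n + 1 + k)) / (block_prod Q n k * real (Q (n + 1 + k)))"
    using block_prod_pos[of n "Suc k"] unfolding tail_term_def block_prod_Suc
    by (intro divide_right_mono) auto
  also have "\<dots> = 1 / block_prod Q n k" using Q_ge_2[of "n + 1 + k"] by simp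
  also have "\<dots> \<le> 1 / 2 ^ k"
    using block_prod_ge_power[OF basic, where n=n and k=k] block_prod_pos[of n k]
    by (intro divide_left_mono) auto
  finally show "tail_term Q E n k \<le> (1/2) ^ k" by (simp add: power_one_over)
qed

lemma tail_summable: "summable (tail_term Q E n)"
  by (rule summable_comparison_test'[where g="\<lambda>k. (1/2)^k" and N=0]) (use tail_term_bounds in auto)

lemma cantor_tail_nonneg: "0 \<le> cantor_tail Q E n"
  unfolding cantor_tail_def using tail_summable tail_term_bounds by (intro suminf_nonneg) auto

text \<open>A crude bound, refined to R_n <= 1 below.\<close>
lemma cantor_tail_le_2: "cantor_tail Q E n \<le> 2"
proof -
  have "cantor_tail Q E n \<le> (\<Sum>k. (1/2::real) ^ k)"
    unfolding cantor_tail_def using tail_summable tail_term_bounds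
    by (intro suminf_le summable_geometric) auto
  also have "\<dots> = 2" by (subst suminf_geometric) auto
  finally show ?thesis .
qed

lemma cantor_tail_step:
  "cantor_tail Q E n = (real_of_int (E (n + 1)) + cantor_tail Q E (n + 1)) / real (Q (n + 1))"
proof -
  have "tail_term Q E n (Suc k) = tail_term Q E (n + 1) k / real (Q (n + 1))" for k
    unfolding tail_term_def block_prod_Suc_head[of Q n "Suc k"] by (simp add: add_ac)
  moreover have "tail_term Q E n 0 = real_of_int (E (n + 1)) / real (Q (n + 1))"
    by (simp add: tail_term_def block_prod_def)
  moreover have "suminf (tail_term Q E n) = tail_term Q E n 0 + (\<Sum>k. tail_term Q E n (Suc k))"
    using suminf_split_head[OF tail_summable[of n]] by simp
  ultimately show ?thesis
    unfolding cantor_tail_def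
    using suminf_divide[OF tail_summable[of "n + 1"], of "real (Q (n + 1))"]
    by (simp add: add_divide_distrib)
qed

text \<open>Iterating the recursion improves the bound R_n <= 1 + 2^{-k} by a factor 1/2 at each
  step, whence R_n <= 1.\<close>
lemma cantor_tail_le_1: "cantor_tail Q E n \<le> 1"
proof -
  have geometric_bound: "\<forall>n. cantor_tail Q E n \<le> 1 + (1/2) ^ k" for k
  proof (induction k)
    case 0 show ?case using cantor_tail_le_2 by simp
  next
    case (Suc k)
    show ?case
    proof
      fix n
      have q: "real (Q (n + 1)) \<ge> 2" by (rule Q_ge_2) simp
      have "cantor_tail Q E n * real (Q (n + 1)) = real_of_int (E (n + 1)) + cantor_tail Q E (n + 1)"
        using q by (subst cantor_tail_step) simp
      also have "\<dots> \<le> (real (Q (n + 1)) - 1) + (1 + (1/2) ^ k)"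
        using Suc digits[of "n + 1"] by (intro add_mono) auto
      also have "\<dots> \<le> (1 + (1/2) ^ Suc k) * real (Q (n + 1))"
        using q by (simp add: algebra_simps)
      finally show "cantor_tail Q E n \<le> 1 + (1/2) ^ Suc k" using q by simp
    qed
  qed
  show ?thesis
  proof (rule field_le_epsilon)
    fix e :: real assume "0 < e"
    then obtain k where "(1/2::real) ^ k < e" using real_arch_pow_inv[of e "1/2"] by auto
    moreover have "cantor_tail Q E n \<le> 1 + (1/2) ^ k" using geometric_bound by blast
    ultimately show "cantor_tail Q E n \<le> 1 + e" by linarith
  qed
qed

lemma cantor_tail_eq_1_propagates:
  assumes "cantor_tail Q E m = 1"
  shows "cantor_tail Q E (m + 1) = 1 \<and> E (m + 1) = int (Q (m + 1)) - 1"
proof -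
  have "real (Q (m + 1)) \<ge> 2" by (rule Q_ge_2) simp
  hence "real (Q (m + 1)) = real_of_int (E (m + 1)) + cantor_tail Q E (m + 1)"
    using assms cantor_tail_step[of m] by (simp add: field_simps)
  moreover have "real_of_int (E (m + 1)) \<le> real (Q (m + 1)) - 1" using digits[of "m + 1"] by simp
  moreover note cantor_tail_le_1[of "m + 1"]
  ultimately show ?thesis by linarith
qed

lemma cantor_tail_less_1:
  assumes not_eventually_max: "infinite {m. m \<ge> 1 \<and> E m \<noteq> int (Q m) - 1}"
  shows "cantor_tail Q E n < 1"
proof (rule ccontr)
  assume "\<not> cantor_tail Q E n < 1"
  hence "cantor_tail Q E n = 1" using cantor_tail_le_1[of n] by simp
  have all_max: "cantor_tail Q E (n + i) = 1 \<and> E (n + i + 1) = int (Q (n + i + 1)) - 1" for i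
  proof (induction i)
    case 0 show ?case using cantor_tail_eq_1_propagates \<open>cantor_tail Q E n = 1\<close> by simp
  next
    case (Suc i)
    then show ?case using cantor_tail_eq_1_propagates[of "n + i + 1"]
      cantor_tail_eq_1_propagates[of "n + i"] by simp
  qed
  have "{m. m \<ge> 1 \<and> E m \<noteq> int (Q m) - 1} \<subseteq> {..n}"
  proof
    fix m assume m: "m \<in> {m. m \<ge> 1 \<and> E m \<noteq> int (Q m) - 1}"
    show "m \<in> {..n}"
    proof (rule ccontr)
      assume "m \<notin> {..n}"
      hence "m = n + (m - n - 1) + 1" by auto
      with all_max[of "m - n - 1"] m show False by simp
    qed
  qed
  with not_eventually_max show False using finite_subset by blast
qed

lemma block_prod_times_minus_tail_Ints:
  assumes "cantor_tail Q E 0 = x - real_of_int (E 0)"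
  shows "block_prod Q 0 m * x - cantor_tail Q E m \<in> \<int>"
proof (induction m)
  case 0 show ?case using assms by (simp add: block_prod_def)
next
  case (Suc m)
  then obtain z where z: "block_prod Q 0 m * x - cantor_tail Q E m = of_int z"
    by (auto elim: Ints_cases)
  have "real (Q (m + 1)) > 0" using Q_ge_2[of "m + 1"] by simp
  hence "real (Q (m + 1)) * cantor_tail Q E m - cantor_tail Q E (m + 1) = real_of_int (E (m + 1))"
    using cantor_tail_step[of m] by (simp add: field_simps)
  hence "block_prod Q 0 (Suc m) * x - cantor_tail Q E (Suc m)
         = real (Q (m + 1)) * (block_prod Q 0 m * x - cantor_tail Q E m) + real_of_int (E (m + 1))"
    unfolding block_prod_Suc by (simp add: algebra_simps)
  also have "\<dots> = of_int (int (Q (m + 1)) * z + E (m + 1))" unfolding z by simp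
  finally show ?case by (metis Ints_of_int)
qed

end

lemma cantor_expansion_digits:
  assumes "cantor_expansion Q x E" "m \<ge> 1"
  shows "0 \<le> E m \<and> E m \<le> int (Q m) - 1"
  using assms by (simp add: cantor_expansion_def)

lemma cantor_tail_0:
  assumes "cantor_expansion Q x E"
  shows "cantor_tail Q E 0 = x - real_of_int (E 0)"
proof -
  have "(\<lambda>k. real_of_int (E (Suc k)) / (\<Prod>j=1..Suc k. real (Q j))) = tail_term Q E 0"
    unfolding tail_term_def block_prod_from_0 by simp
  with assms have "tail_term Q E 0 sums (x - real_of_int (E 0))"
    unfolding cantor_expansion_def by argo
  thus ?thesis unfolding cantor_tail_def by (rule sums_unique[symmetric])
qed

lemma T_Q_eq_cantor_tail:
  assumes basic: "basic_sequence Q" and expansion: "cantor_expansion Q x E"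
  shows "T_Q Q n x = cantor_tail Q E n"
proof -
  note digits = cantor_expansion_digits[OF expansion]
  have "block_prod Q 0 n * x - cantor_tail Q E n \<in> \<int>"
    using block_prod_times_minus_tail_Ints[OF basic digits cantor_tail_0[OF expansion]] .
  moreover have "0 \<le> cantor_tail Q E n" "cantor_tail Q E n < 1"
    using cantor_tail_nonneg[OF basic digits] cantor_tail_less_1[OF basic digits] expansion
    by (auto simp: cantor_expansion_def)
  ultimately show ?thesis unfolding T_Q_def block_prod_from_0 frac_unique_iff by simp
qed

text \<open>The key estimate: the shifts of two expansions differ by at most
  (|E_{n+1} - F_{n+1}| + 1) / q_{n+1}, since both tails lie in [0,1).\<close>
lemma T_Q_distance:
  assumes basic: "basic_sequence Q"
    and "cantor_expansion Q x E" "cantor_expansion Q y F"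
  shows "\<bar>T_Q Q n x - T_Q Q n y\<bar>
         \<le> (real_of_int \<bar>E (n + 1) - F (n + 1)\<bar> + 1) / real (Q (n + 1))"
proof -
  note digits_E = cantor_expansion_digits[OF assms(2)]
    and digits_F = cantor_expansion_digits[OF assms(3)]
  let ?R = "cantor_tail Q E (n + 1)" and ?S = "cantor_tail Q F (n + 1)"
  have "Q (n + 1) \<ge> 2" using basic unfolding basic_sequence_def by simp
  hence q: "real (Q (n + 1)) > 0" by simp
  have "\<bar>?R - ?S\<bar> \<le> 1"
    using cantor_tail_nonneg[OF basic digits_E, of "n + 1"] cantor_tail_nonneg[OF basic digits_F, of "n + 1"]
      cantor_tail_le_1[OF basic digits_E, of "n + 1"] cantor_tail_le_1[OF basic digits_F, of "n + 1"]
    by linarith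
  hence "\<bar>real_of_int (E (n + 1) - F (n + 1)) + (?R - ?S)\<bar> \<le> real_of_int \<bar>E (n + 1) - F (n + 1)\<bar> + 1"
    by linarith
  moreover have "T_Q Q n x - T_Q Q n y
                 = (real_of_int (E (n + 1) - F (n + 1)) + (?R - ?S)) / real (Q (n + 1))"
    unfolding T_Q_eq_cantor_tail[OF basic assms(2)] T_Q_eq_cantor_tail[OF basic assms(3)]
    using cantor_tail_step[OF basic digits_E, of n] cantor_tail_step[OF basic digits_F, of n]
    by (simp add: diff_divide_distrib[symmetric])
  ultimately show ?thesis using q by (simp add: divide_right_mono)
qed

theorem theorem3p2:
  fixes Q :: "nat \<Rightarrow> nat" and x y :: real and E F :: "nat \<Rightarrow> int"
  assumes "basic_sequence Q"
    and "cantor_expansion Q x E"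
    and "Q_distribution_normal Q x"
    and "cantor_expansion Q y F"
    and "(\<lambda>N. (1 / real N) * (\<Sum>n=1..N. (real_of_int \<bar>E n - F n\<bar> + 1) / real (Q n))) \<longlonglongrightarrow> 0"
  shows "Q_distribution_normal Q y"
proof -
  define d where "d n = (real_of_int \<bar>E (n + 1) - F (n + 1)\<bar> + 1) / real (Q (n + 1))" for n
  have close: "\<bar>T_Q Q n x - T_Q Q n y\<bar> \<le> d n" for n
    unfolding d_def by (rule T_Q_distance[OF assms(1,2,4)])
  have "(\<Sum>n=1..N. (real_of_int \<bar>E n - F n\<bar> + 1) / real (Q n)) = (\<Sum>n<N. d n)" for N
    unfolding d_def by (simp add: sum.atLeast1_atMost_eq)
  with assms(5) have mean: "(\<lambda>N. (1 / real N) * (\<Sum>n<N. d n)) \<longlonglongrightarrow> 0" by simp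
  have in_unit_interval: "0 \<le> T_Q Q n z \<and> T_Q Q n z < 1" for n z
    by (simp add: T_Q_def frac_lt_1)
  show ?thesis
    using uniformly_distributed_mod1_perturb[OF _ in_unit_interval close mean in_unit_interval] assms(3)
    unfolding Q_distribution_normal_def by blast
qed

end
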